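(* Let $n\geq 2L(3,1)$ and let $\mathcal{F},\mathcal{G}\subseteq\Pi(n,3)$ be non-trivial cross $1$-intersecting families maximizing $|\mathcal{F}||\mathcal{G}|$ (among all such pairs). If $|\mathcal{F}|\leq|\mathcal{G}|$, then $\mathcal{F}=\mathcal{A}(3,\{A\},M)$ and $\mathcal{G}=\mathcal{B}(3,\{A\},M)$ for some singleton $A$ and some $3$-partition $M$ (of a subset of $[n]$) with $A\in M$ and $|\cup M|<n$.
   Context: $[n]=\{1,\ldots,n\}$. A partition is a set of pairwise disjoint nonempty sets (blocks); $\cup P$ is the union of its blocks. $\Pi(n,k)$ is the set of partitions of $[n]$ into $k$ blocks. $F\cap G$ is the set of common blocks. $L(k,t):=(t+1)+(k-t+1)\log_2((t+1)(k-t+1))$, so $L(3,1)=2+3\log_2 6$. $\mathcal{F},\mathcal{G}$ are cross $1$-intersecting if $|F\cap G|\geq1$ for all $F\in\mathcal{F},G\in\mathcal{G}$; non-trivial if no block belongs to every member of $\mathcal{F}\cup\mathcal{G}$. For an $\ell$-partition $M$ and $X\subseteq M$ with $|X|=t$, $\overline{\cup M}=[n]\setminus\cup M$, $\mathcal{A}(k,X,M)=\{F\in\Pi(n,k):X\subseteq F,\ F\cap(M\setminus X)\neq\emptyset\}$ and $\mathcal{B}(\ell,X,M)=\{F\in\Pi(n,\ell):X\subseteq F\}\cup\{(M\setminus\{B\})\cup\{B\cup\overline{\cup M}\}:B\in X\}$. *)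

theory Defs
  imports Complex_Main
begin

definition is_partition :: "nat set set \<Rightarrow> bool" where
  "is_partition P \<longleftrightarrow> (\<forall>B\<in>P. B \<noteq> {}) \<and> (\<forall>B\<in>P. \<forall>C\<in>P. B \<noteq> C \<longrightarrow> B \<inter> C = {})"

definition Pi_part :: "nat \<Rightarrow> nat \<Rightarrow> nat set set set" where
  "Pi_part n k = {P. is_partition P \<and> \<Union>P = {1..n} \<and> card P = k}"

definition L :: "nat \<Rightarrow> nat \<Rightarrow> real" where
  "L k t = real (t + 1) + real (k - t + 1) * log 2 (real ((t + 1) * (k - t + 1)))"

definition cross_intersecting :: "nat set set set \<Rightarrow> nat set set set \<Rightarrow> bool" where
  "cross_intersecting \<F> \<G> \<longleftrightarrow> (\<forall>F\<in>\<F>. \<forall>G\<in>\<G>. card (F \<inter> G) \<ge> 1)"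

definition non_trivial :: "nat set set set \<Rightarrow> nat set set set \<Rightarrow> bool" where
  "non_trivial \<F> \<G> \<longleftrightarrow> \<not> (\<exists>B. \<forall>P \<in> \<F> \<union> \<G>. B \<in> P)"

definition A_fam :: "nat \<Rightarrow> nat \<Rightarrow> nat set set \<Rightarrow> nat set set \<Rightarrow> nat set set set" where
  "A_fam n k X M = {F \<in> Pi_part n k. X \<subseteq> F \<and> F \<inter> (M - X) \<noteq> {}}"

definition B_fam :: "nat \<Rightarrow> nat \<Rightarrow> nat set set \<Rightarrow> nat set set \<Rightarrow> nat set set set" where
  "B_fam n l X M = {F \<in> Pi_part n l. X \<subseteq> F}
     \<union> {(M - {B}) \<union> {B \<union> ({1..n} - \<Union>M)} | B. B \<in> X}"

end

theory Submission
  imports Defs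
begin

text \<open>
  If all members of \<open>\<F>\<close> share a block \<open>A\<close>, non-triviality yields some \<open>G\<^sub>0 \<in> \<G>\<close> with
  \<open>A \<notin> G\<^sub>0\<close>; every member of \<open>\<F>\<close> is then \<open>{A, C, [n] - (A \<union> C)}\<close> for one of the at most two
  blocks \<open>C\<close> of \<open>G\<^sub>0\<close> disjoint from \<open>A\<close>, so \<open>|\<F>| \<le> 2\<close>. If \<open>\<F>\<close> has no common block, every
  \<open>G \<in> \<G>\<close> is determined by a block \<open>B\<close> of a fixed \<open>F \<in> \<F>\<close> together with a block of some
  member of \<open>\<F>\<close> avoiding \<open>B\<close>, so \<open>|\<G>| \<le> 9\<close>. A single partition meets fewer than
  \<open>2^(n-1)\<close> partitions, because exactly \<open>2^(n-b-1) - 1\<close> partitions contain a given block of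
  size \<open>b\<close>. Since the pair \<open>\<A>(3,{{1}},M), \<B>(3,{{1}},M)\<close> with \<open>M = {{1},{2},{3}}\<close> has product
  \<open>2^(n-1)\<close>, maximality leaves only the case \<open>|\<F>| = 2\<close> with a common block \<open>A\<close>. Then
  \<open>\<F> = \<A>(3,{A},M)\<close> for \<open>M = {A, C, D}\<close>, and every \<open>G\<close> meeting both members of \<open>\<F>\<close> either
  contains \<open>A\<close> or equals \<open>{C, D, [n] - (C \<union> D)}\<close>; hence \<open>\<G> \<subseteq> \<B>(3,{A},M)\<close>, which has
  \<open>2^(n-|A|-1)\<close> members, and maximality forces \<open>|A| = 1\<close> and equality.
\<close>

section \<open>Partitions of \<open>[n]\<close> into three blocks\<close>

lemma Pi_partD:
  assumes "Q \<in> Pi_part n k"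
  shows "\<Union>Q = {1..n}" and "card Q = k" and "X \<in> Q \<Longrightarrow> X \<noteq> {}" and "X \<in> Q \<Longrightarrow> X \<subseteq> {1..n}"
    and "X \<in> Q \<Longrightarrow> Y \<in> Q \<Longrightarrow> X \<noteq> Y \<Longrightarrow> X \<inter> Y = {}"
  using assms unfolding Pi_part_def is_partition_def by auto

lemma Pi_part_block_eq:
  assumes "Q \<in> Pi_part n k" "X \<in> Q" "Y \<in> Q" "x \<in> X" "x \<in> Y"
  shows "X = Y"
  using Pi_partD(5)[OF assms(1-3)] assms(4,5) by blast

lemma finite_Pi_part: "finite (Pi_part n k)"
proof (rule finite_subset)
  show "Pi_part n k \<subseteq> Pow (Pow {1..n})" unfolding Pi_part_def by auto
qed simp

lemma finite_Pi_part_blocks: "Q \<in> Pi_part n k \<Longrightarrow> finite Q"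
  by (metis Pi_partD(1) finite_UnionD finite_atLeastAtMost)

lemma finite_Pi_part_block: "Q \<in> Pi_part n k \<Longrightarrow> X \<in> Q \<Longrightarrow> finite X"
  by (meson Pi_partD(4) finite_atLeastAtMost finite_subset)

lemma Pi_part_3_eq:
  assumes Q: "Q \<in> Pi_part n 3" and "X \<in> Q" "Y \<in> Q" "X \<noteq> Y"
  shows "Q = {X, Y, {1..n} - (X \<union> Y)}"
proof -
  have "card (Q - {X, Y}) = 1"
    using Pi_partD(2)[OF Q] assms(2-4) finite_Pi_part_blocks[OF Q] by (simp add: card_Diff_subset)
  then obtain Z where Z: "Q - {X, Y} = {Z}" by (rule card_1_singletonE)
  then have QZ: "Q = {X, Y, Z}" using assms(2,3) by blast
  have "Z \<inter> X = {}" "Z \<inter> Y = {}" using Pi_partD(5)[OF Q] Z assms(2,3) by auto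
  moreover have "X \<union> Y \<union> Z = {1..n}" using Pi_partD(1)[OF Q] QZ by (simp add: Un_assoc)
  ultimately have "Z = {1..n} - (X \<union> Y)" by blast
  then show ?thesis using QZ by simp
qed

lemma Pi_part_3I:
  assumes "X \<noteq> {}" "Y \<noteq> {}" "X \<inter> Y = {}" "X \<union> Y \<subset> {1..n}"
  shows "{X, Y, {1..n} - (X \<union> Y)} \<in> Pi_part n 3"
proof -
  have "X \<noteq> Y" "X \<noteq> {1..n} - (X \<union> Y)" "Y \<noteq> {1..n} - (X \<union> Y)" "{1..n} - (X \<union> Y) \<noteq> {}"
    using assms by auto
  then show ?thesis
    using assms unfolding Pi_part_def is_partition_def by auto
qed

lemma A_fam_subset: "A_fam n k X M \<subseteq> Pi_part n k"
  unfolding A_fam_def by blast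

lemma cross_intersecting_iff:
  assumes "\<X> \<subseteq> Pi_part n k"
  shows "cross_intersecting \<X> \<Y> \<longleftrightarrow> (\<forall>F\<in>\<X>. \<forall>G\<in>\<Y>. F \<inter> G \<noteq> {})"
  unfolding cross_intersecting_def
  using assms finite_Pi_part_blocks by (fastforce simp: Suc_le_eq card_gt_0_iff)

text \<open>A 3-partition containing \<open>B\<close> is determined by its block avoiding both \<open>B\<close> and a fixed
  point \<open>c \<notin> B\<close>, which can be any nonempty subset of \<open>[n] - B - {c}\<close>.\<close>

lemma Pi_part_3_containing_eq_image:
  assumes B: "B \<noteq> {}" "B \<subseteq> {1..n}" and c: "c \<in> {1..n}" "c \<notin> B"
  shows "{Q \<in> Pi_part n 3. B \<in> Q} = (\<lambda>D. {B, D, {1..n} - (B \<union> D)}) ` (Pow ({1..n} - B - {c}) - {{}})"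
proof (intro equalityI subsetI)
  fix Q assume "Q \<in> {Q \<in> Pi_part n 3. B \<in> Q}"
  then have Q: "Q \<in> Pi_part n 3" and BQ: "B \<in> Q" by auto
  obtain C where C: "C \<in> Q" "c \<in> C" using Pi_partD(1)[OF Q] c(1) by blast
  have BC: "B \<noteq> C" using C c by auto
  define D where "D = {1..n} - (B \<union> C)"
  have QC: "Q = {B, C, D}" unfolding D_def using Pi_part_3_eq[OF Q BQ C(1) BC] .
  then have "D \<noteq> {}" using Pi_partD(3)[OF Q] by blast
  moreover have "D \<subseteq> {1..n} - B - {c}" using C(2) unfolding D_def by blast
  moreover have "{1..n} - (B \<union> D) = C" using Pi_partD(4)[OF Q C(1)] Pi_partD(5)[OF Q BQ C(1) BC] B(2) unfolding D_def by blast
  ultimately show "Q \<in> (\<lambda>D. {B, D, {1..n} - (B \<union> D)}) ` (Pow ({1..n} - B - {c}) - {{}})"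
    unfolding QC by (auto simp: insert_commute)
next
  fix Q assume "Q \<in> (\<lambda>D. {B, D, {1..n} - (B \<union> D)}) ` (Pow ({1..n} - B - {c}) - {{}})"
  then obtain D where D: "D \<subseteq> {1..n} - B - {c}" "D \<noteq> {}" "Q = {B, D, {1..n} - (B \<union> D)}" by blast
  have "B \<union> D \<subset> {1..n}" using B(2) D(1) c by blast
  then have "Q \<in> Pi_part n 3" using Pi_part_3I[OF B(1) D(2)] D by blast
  then show "Q \<in> {Q \<in> Pi_part n 3. B \<in> Q}" using D(3) by simp
qed

lemma card_Pi_part_3_containing:
  assumes B: "B \<noteq> {}" "B \<subseteq> {1..n}"
  shows "card {Q \<in> Pi_part n 3. B \<in> Q} = 2 ^ (n - card B - 1) - 1"
proof (cases "B = {1..n}")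
  case True
  have "B \<notin> Q" if Q: "Q \<in> Pi_part n 3" for Q
  proof
    assume "B \<in> Q"
    then have "card (Q - {B}) = 2" using Pi_partD(2)[OF Q] finite_Pi_part_blocks[OF Q] by simp
    then have "Q - {B} \<noteq> {}" by (metis card.empty zero_neq_numeral)
    then show False using \<open>B \<in> Q\<close> Pi_partD(3-5)[OF Q] True by blast
  qed
  then have "{Q \<in> Pi_part n 3. B \<in> Q} = {}" by blast
  moreover have "n - card B - 1 = 0" using True by simp
  ultimately show ?thesis by (simp only: card.empty power_0)
next
  case False
  then obtain c where c: "c \<in> {1..n}" "c \<notin> B" using B by blast
  have "inj_on (\<lambda>D. {B, D, {1..n} - (B \<union> D)}) (Pow ({1..n} - B - {c}) - {{}})"
  proof (rule inj_onI)
    fix D1 D2 assume D1: "D1 \<in> Pow ({1..n} - B - {c}) - {{}}" and D2: "D2 \<in> Pow ({1..n} - B - {c}) - {{}}"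
      and "{B, D1, {1..n} - (B \<union> D1)} = {B, D2, {1..n} - (B \<union> D2)}"
    moreover have "D1 \<noteq> B" "D1 \<noteq> {1..n} - (B \<union> D2)" using D1 D2 c by auto
    ultimately show "D1 = D2" by blast
  qed
  then have "card {Q \<in> Pi_part n 3. B \<in> Q} = card (Pow ({1..n} - B - {c}) - {{}})"
    unfolding Pi_part_3_containing_eq_image[OF B c] by (rule card_image)
  also have "\<dots> = 2 ^ card ({1..n} - B - {c}) - 1" by (simp add: card_Pow)
  also have "card ({1..n} - B - {c}) = n - card B - 1"
    using B(2) c finite_subset[OF B(2)] by (simp add: card_Diff_subset)
  finally show ?thesis .
qed

section \<open>Size bounds for cross-intersecting families\<close>

lemma sum_pairwise_products_le:
  fixes x y z :: nat
  assumes "x \<ge> 1" "y \<ge> 1" "z \<ge> 1"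
  shows "x * y + y * z + z * x \<le> 2 * x * y * z + 1"
proof -
  obtain p q r where "x = p + 1" "y = q + 1" "z = r + 1"
    using assms by (metis le_add_diff_inverse2)
  then show ?thesis by (simp add: algebra_simps)
qed

lemma sum_three_pow2_le:
  fixes b1 b2 b3 :: nat
  assumes "b1 \<ge> 1" "b2 \<ge> 1" "b3 \<ge> 1"
  shows "2 ^ (b2 + b3 - 1) + 2 ^ (b1 + b3 - 1) + 2 ^ (b1 + b2 - 1) \<le> 2 ^ (b1 + b2 + b3 - 1) + (2::nat)"
proof -
  obtain c1 c2 c3 where c: "b1 = c1 + 1" "b2 = c2 + 1" "b3 = c3 + 1"
    using assms by (metis le_add_diff_inverse2)
  have "(2::nat) ^ c1 * 2 ^ c2 + 2 ^ c2 * 2 ^ c3 + 2 ^ c3 * 2 ^ c1 \<le> 2 * 2 ^ c1 * 2 ^ c2 * 2 ^ c3 + 1"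
    by (rule sum_pairwise_products_le) simp_all
  then show ?thesis unfolding c by (simp add: power_add algebra_simps)
qed

lemma card_cross_singleton_lt:
  assumes \<Y>: "\<Y> \<subseteq> Pi_part n 3" and P: "P \<in> Pi_part n 3" and cross: "cross_intersecting {P} \<Y>"
  shows "card \<Y> < 2 ^ (n - 1)"
proof -
  obtain B1 B2 B3 where P_eq: "P = {B1, B2, B3}" and B_distinct: "B1 \<noteq> B2" "B2 \<noteq> B3" "B1 \<noteq> B3"
    using Pi_partD(2)[OF P] unfolding card_3_iff by blast
  define star where "star B = {Q \<in> Pi_part n 3. B \<in> Q}" for B
  have blocks: "B \<noteq> {}" "B \<subseteq> {1..n}" "finite B" if "B \<in> P" for B
    using Pi_partD(3,4) finite_Pi_part_block P that by blast+
  have star_le: "card (star B) + 1 \<le> 2 ^ (n - card B - 1)" if "B \<in> P" for B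
    using card_Pi_part_3_containing[OF blocks(1,2)[OF that]] unfolding star_def
    by (simp add: Suc_leI)
  have "\<forall>G\<in>\<Y>. P \<inter> G \<noteq> {}"
    using cross_intersecting_iff[of "{P}" n 3 \<Y>] P cross by simp
  then have "\<Y> \<subseteq> star B1 \<union> star B2 \<union> star B3"
    using \<Y> unfolding P_eq star_def by blast
  then have "card \<Y> \<le> card (star B1 \<union> star B2 \<union> star B3)"
    by (rule card_mono[rotated]) (simp add: star_def finite_Pi_part)
  also have "\<dots> \<le> card (star B1) + card (star B2) + card (star B3)"
    by (meson add_le_mono card_Un_le le_trans order_refl)
  finally have card_\<Y>: "card \<Y> \<le> card (star B1) + card (star B2) + card (star B3)" .
  have "n = card (B1 \<union> B2 \<union> B3)" using Pi_partD(1)[OF P] unfolding P_eq by (simp add: Un_assoc)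
  also have "\<dots> = card B1 + card B2 + card B3"
    using Pi_partD(5)[OF P] B_distinct blocks(3) unfolding P_eq
    by (simp add: card_Un_disjoint Int_Un_distrib2)
  finally have n: "n = card B1 + card B2 + card B3" .
  have "card B1 \<ge> 1" "card B2 \<ge> 1" "card B3 \<ge> 1"
    using blocks unfolding P_eq by (simp_all add: Suc_le_eq card_gt_0_iff)
  then have "2 ^ (n - card B1 - 1) + 2 ^ (n - card B2 - 1) + 2 ^ (n - card B3 - 1) \<le> 2 ^ (n - 1) + (2::nat)"
    using sum_three_pow2_le unfolding n by (simp add: ac_simps)
  moreover have "B1 \<in> P" "B2 \<in> P" "B3 \<in> P" unfolding P_eq by simp_all
  ultimately show ?thesis using card_\<Y> star_le[of B1] star_le[of B2] star_le[of B3] by linarith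
qed

lemma card_le_9_if_no_common_block:
  assumes \<X>: "\<X> \<subseteq> Pi_part n 3" and \<Y>: "\<Y> \<subseteq> Pi_part n 3"
    and cross: "cross_intersecting \<X> \<Y>"
    and "\<X> \<noteq> {}" and no_common: "\<not> (\<exists>B. \<forall>F\<in>\<X>. B \<in> F)"
  shows "card \<Y> \<le> 9"
proof -
  obtain F where F: "F \<in> \<X>" using \<open>\<X> \<noteq> {}\<close> by blast
  have FP: "F \<in> Pi_part n 3" using F \<X> by blast
  define avoid where "avoid B = (SOME F. F \<in> \<X> \<and> B \<notin> F)" for B
  have avoid: "avoid B \<in> \<X> \<and> B \<notin> avoid B" for B
  proof -
    have "\<exists>F. F \<in> \<X> \<and> B \<notin> F" using no_common by blast
    then show ?thesis unfolding avoid_def by (rule someI_ex)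
  qed
  have meet: "\<forall>F\<in>\<X>. \<forall>G\<in>\<Y>. F \<inter> G \<noteq> {}" using cross cross_intersecting_iff[OF \<X>] by blast
  define part where "part B B' = {B, B', {1..n} - (B \<union> B')}" for B B' :: "nat set"
  have "\<Y> \<subseteq> (\<Union>B\<in>F. part B ` avoid B)"
  proof
    fix G assume G: "G \<in> \<Y>"
    then have GP: "G \<in> Pi_part n 3" using \<Y> by blast
    obtain B where B: "B \<in> F" "B \<in> G" using meet F G by blast
    obtain B' where B': "B' \<in> avoid B" "B' \<in> G" using meet avoid G by blast
    have "B \<noteq> B'" using avoid B' by metis
    then have "G = part B B'" unfolding part_def using Pi_part_3_eq[OF GP B(2) B'(2)] by simp
    then show "G \<in> (\<Union>B\<in>F. part B ` avoid B)" using B B' by blast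
  qed
  then have "card \<Y> \<le> card (\<Union>B\<in>F. part B ` avoid B)"
  proof (rule card_mono[rotated])
    have "finite (avoid B)" for B using avoid \<X> finite_Pi_part_blocks by blast
    then show "finite (\<Union>B\<in>F. part B ` avoid B)" using finite_Pi_part_blocks[OF FP] by blast
  qed
  also have "\<dots> \<le> (\<Sum>B\<in>F. card (part B ` avoid B))"
    by (rule card_UN_le[OF finite_Pi_part_blocks[OF FP]])
  also have "\<dots> \<le> (\<Sum>B\<in>F. 3)"
  proof (rule sum_mono)
    fix B
    have "avoid B \<in> Pi_part n 3" using avoid \<X> by blast
    then have "finite (avoid B)" "card (avoid B) = 3" using finite_Pi_part_blocks Pi_partD(2) by blast+
    then show "card (part B ` avoid B) \<le> 3" using card_image_le by metis
  qed
  also have "\<dots> = 9" using Pi_partD(2)[OF FP] by simp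
  finally show ?thesis .
qed

lemma card_blocks_disjoint_lt:
  assumes Q: "Q \<in> Pi_part n k" and "A \<noteq> {}" "A \<subseteq> {1..n}"
  shows "card {C \<in> Q. C \<inter> A = {}} < k"
proof -
  obtain C0 where C0: "C0 \<in> Q" "C0 \<inter> A \<noteq> {}" using Pi_partD(1)[OF Q] assms(2,3) by blast
  then have "{C \<in> Q. C \<inter> A = {}} \<subset> Q" by blast
  then show ?thesis using psubset_card_mono[OF finite_Pi_part_blocks[OF Q]] Pi_partD(2)[OF Q] by simp
qed

lemma common_block_completions:
  assumes \<X>: "\<X> \<subseteq> Pi_part n 3" and \<Y>: "\<Y> \<subseteq> Pi_part n 3"
    and cross: "cross_intersecting \<X> \<Y>" and nontriv: "non_trivial \<X> \<Y>"
    and common: "\<forall>F\<in>\<X>. A \<in> F" and "\<X> \<noteq> {}"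
  obtains G0 where "G0 \<in> Pi_part n 3" and "card {C \<in> G0. C \<inter> A = {}} \<le> 2"
    and "\<X> \<subseteq> (\<lambda>C. {A, C, {1..n} - (A \<union> C)}) ` {C \<in> G0. C \<inter> A = {}}"
proof -
  obtain F0 where "F0 \<in> \<X>" using \<open>\<X> \<noteq> {}\<close> by blast
  then have "F0 \<in> Pi_part n 3" "A \<in> F0" using \<X> common by auto
  then have A: "A \<noteq> {}" "A \<subseteq> {1..n}" using Pi_partD(3,4) by auto
  obtain G0 where G0: "G0 \<in> \<Y>" "A \<notin> G0"
    using nontriv common unfolding non_trivial_def by auto
  have G0P: "G0 \<in> Pi_part n 3" using G0 \<Y> by blast
  have "\<X> \<subseteq> (\<lambda>C. {A, C, {1..n} - (A \<union> C)}) ` {C \<in> G0. C \<inter> A = {}}"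
  proof
    fix F assume F: "F \<in> \<X>"
    then have FP: "F \<in> Pi_part n 3" and AF: "A \<in> F" using \<X> common by auto
    obtain C where C: "C \<in> F" "C \<in> G0" using cross G0 F cross_intersecting_iff[OF \<X>] by blast
    have "A \<noteq> C" using C G0 by auto
    then have "F = {A, C, {1..n} - (A \<union> C)}" "C \<inter> A = {}"
      using Pi_part_3_eq[OF FP AF C(1)] Pi_partD(5)[OF FP AF C(1)] by auto
    then show "F \<in> (\<lambda>C. {A, C, {1..n} - (A \<union> C)}) ` {C \<in> G0. C \<inter> A = {}}" using C by blast
  qed
  moreover have "card {C \<in> G0. C \<inter> A = {}} \<le> 2"
    using card_blocks_disjoint_lt[OF G0P A] by simp
  ultimately show ?thesis using that G0P by blast
qed

lemma card_le_2_if_common_block: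
  assumes \<X>: "\<X> \<subseteq> Pi_part n 3" and \<Y>: "\<Y> \<subseteq> Pi_part n 3"
    and cross: "cross_intersecting \<X> \<Y>" and nontriv: "non_trivial \<X> \<Y>"
    and common: "\<forall>F\<in>\<X>. A \<in> F"
  shows "card \<X> \<le> 2"
proof (cases "\<X> = {}")
  case False
  then obtain G0 where G0: "G0 \<in> Pi_part n 3" and card_le: "card {C \<in> G0. C \<inter> A = {}} \<le> 2"
    and sub: "\<X> \<subseteq> (\<lambda>C. {A, C, {1..n} - (A \<union> C)}) ` {C \<in> G0. C \<inter> A = {}}"
    using common_block_completions[OF assms] by blast
  have fin: "finite {C \<in> G0. C \<inter> A = {}}" using finite_Pi_part_blocks[OF G0] by simp
  have "card \<X> \<le> card ((\<lambda>C. {A, C, {1..n} - (A \<union> C)}) ` {C \<in> G0. C \<inter> A = {}})"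
    using sub fin by (intro card_mono) simp_all
  also have "\<dots> \<le> card {C \<in> G0. C \<inter> A = {}}" using fin by (rule card_image_le)
  finally show ?thesis using card_le by simp
qed simp

section \<open>The extremal pair\<close>

text \<open>\<open>{A, C, D}\<close> is the partition \<open>M\<close> of a proper subset of \<open>[n]\<close>, with \<open>X = {A}\<close>.\<close>

locale proper_tripartition =
  fixes n :: nat and A C D :: "nat set"
  assumes nonempty: "A \<noteq> {}" "C \<noteq> {}" "D \<noteq> {}"
    and disjoint: "A \<inter> C = {}" "A \<inter> D = {}" "C \<inter> D = {}"
    and proper: "A \<union> C \<union> D \<subset> {1..n}"
begin

lemma swap: "proper_tripartition n A D C"
  using nonempty disjoint proper by unfold_locales auto

lemma blocks_distinct: "A \<noteq> C" "A \<noteq> D" "C \<noteq> D"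
  using nonempty disjoint by auto

lemma point_outside: obtains w where "w \<in> {1..n}" "w \<notin> A" "w \<notin> C" "w \<notin> D"
  using proper by blast

lemma is_partition: "is_partition {A, C, D}"
  using nonempty disjoint unfolding is_partition_def by auto

lemma card_blocks: "card {A, C, D} = 3"
  using blocks_distinct by simp

lemma card_Union_lt: "card (\<Union>{A, C, D}) < n"
  using psubset_card_mono[OF _ proper] by (simp add: Un_assoc)

lemma card_A_lt: "card A + 2 < n"
proof -
  have fin: "finite A" "finite C" "finite D"
    using proper by (meson finite_atLeastAtMost finite_subset le_supE psubsetE)+
  then have "card C \<ge> 1" "card D \<ge> 1" using nonempty by (simp_all add: Suc_le_eq card_gt_0_iff)
  moreover have "card (\<Union>{A, C, D}) = card A + card C + card D"
  proof -
    have "card (C \<union> D) = card C + card D" using fin disjoint card_Un_disjoint by blast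
    moreover have "A \<inter> (C \<union> D) = {}" using disjoint by blast
    ultimately show ?thesis using fin card_Un_disjoint[of A "C \<union> D"] by simp
  qed
  ultimately show ?thesis using card_Union_lt by linarith
qed

lemma completion_in_Pi_part: "{A, C, {1..n} - (A \<union> C)} \<in> Pi_part n 3"
  using Pi_part_3I[of A C n] nonempty disjoint proper by blast

lemma blocks_Diff_A: "{A, C, D} - {A} = {C, D}"
  using blocks_distinct by auto

lemma A_fam_eq:
  "A_fam n 3 {A} {A, C, D} = {{A, C, {1..n} - (A \<union> C)}, {A, D, {1..n} - (A \<union> D)}}"
proof (intro equalityI subsetI)
  fix F assume "F \<in> A_fam n 3 {A} {A, C, D}"
  then have F: "F \<in> Pi_part n 3" and AF: "A \<in> F" and "C \<in> F \<or> D \<in> F"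
    unfolding A_fam_def blocks_Diff_A by auto
  then have "F = {A, C, {1..n} - (A \<union> C)} \<or> F = {A, D, {1..n} - (A \<union> D)}"
    by (metis Pi_part_3_eq blocks_distinct(1,2))
  then show "F \<in> {{A, C, {1..n} - (A \<union> C)}, {A, D, {1..n} - (A \<union> D)}}" by blast
next
  have "{A, C, {1..n} - (A \<union> C)} \<in> A_fam n 3 {A} {A, C, D}"
    using completion_in_Pi_part unfolding A_fam_def blocks_Diff_A by simp
  moreover have "{A, D, {1..n} - (A \<union> D)} \<in> A_fam n 3 {A} {A, C, D}"
    using proper_tripartition.completion_in_Pi_part[OF swap] unfolding A_fam_def blocks_Diff_A by simp
  moreover fix F assume "F \<in> {{A, C, {1..n} - (A \<union> C)}, {A, D, {1..n} - (A \<union> D)}}"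
  ultimately show "F \<in> A_fam n 3 {A} {A, C, D}" by blast
qed

lemma card_A_fam: "card (A_fam n 3 {A} {A, C, D}) = 2"
proof -
  obtain w where "w \<in> {1..n}" "w \<notin> A" "w \<notin> C" "w \<notin> D" by (rule point_outside)
  then have "C \<noteq> {1..n} - (A \<union> D)" by blast
  then have "{A, C, {1..n} - (A \<union> C)} \<noteq> {A, D, {1..n} - (A \<union> D)}"
    using blocks_distinct by (metis insert_iff singletonD)
  then show ?thesis unfolding A_fam_eq by simp
qed

lemma B_fam_eq:
  "B_fam n 3 {A} {A, C, D} = insert {C, D, {1..n} - (C \<union> D)} {Q \<in> Pi_part n 3. A \<in> Q}"
proof -
  have "A \<union> ({1..n} - \<Union>{A, C, D}) = {1..n} - (C \<union> D)"
    using proper disjoint by auto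
  then show ?thesis using blocks_Diff_A unfolding B_fam_def by (auto simp: insert_commute)
qed

lemma B_fam_subset: "B_fam n 3 {A} {A, C, D} \<subseteq> Pi_part n 3"
proof -
  have "{C, D, {1..n} - (C \<union> D)} \<in> Pi_part n 3"
    using Pi_part_3I[of C D n] nonempty disjoint proper by blast
  then show ?thesis unfolding B_fam_eq by blast
qed

lemma card_B_fam: "card (B_fam n 3 {A} {A, C, D}) = 2 ^ (n - card A - 1)"
proof -
  obtain w where "w \<in> {1..n}" "w \<notin> A" "w \<notin> C" "w \<notin> D" by (rule point_outside)
  then have "A \<notin> {C, D, {1..n} - (C \<union> D)}" using blocks_distinct by blast
  then have "card (B_fam n 3 {A} {A, C, D}) = card {Q \<in> Pi_part n 3. A \<in> Q} + 1"
    unfolding B_fam_eq by (simp add: finite_Pi_part)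
  also have "\<dots> = 2 ^ (n - card A - 1)"
  proof -
    have "A \<subseteq> {1..n}" using proper by blast
    then have "card {Q \<in> Pi_part n 3. A \<in> Q} = 2 ^ (n - card A - 1) - 1"
      using card_Pi_part_3_containing nonempty(1) by blast
    moreover have "(1::nat) \<le> 2 ^ (n - card A - 1)" by simp
    ultimately show ?thesis by linarith
  qed
  finally show ?thesis .
qed

lemma cross_intersecting_A_fam_B_fam:
  "cross_intersecting (A_fam n 3 {A} {A, C, D}) (B_fam n 3 {A} {A, C, D})"
  unfolding cross_intersecting_iff[OF A_fam_subset] unfolding A_fam_eq B_fam_eq by blast

lemma non_trivial_A_fam_B_fam:
  "non_trivial (A_fam n 3 {A} {A, C, D}) (B_fam n 3 {A} {A, C, D})"
proof -
  obtain w where w: "w \<in> {1..n}" "w \<notin> A" "w \<notin> C" "w \<notin> D" by (rule point_outside)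
  obtain a where a: "a \<in> A" using nonempty by blast
  have a': "a \<notin> C" "a \<notin> D" "a \<in> {1..n}" using a disjoint proper by blast+
  have "C \<noteq> {1..n} - (A \<union> D)" using w by blast
  then have C_notin: "C \<notin> {A, D, {1..n} - (A \<union> D)}" using blocks_distinct by simp
  have "D \<noteq> {1..n} - (A \<union> C)" using w by blast
  then have D_notin: "D \<notin> {A, C, {1..n} - (A \<union> C)}" using blocks_distinct by simp
  have "{1..n} - (C \<union> D) \<noteq> A" using w by blast
  moreover have "{1..n} - (C \<union> D) \<noteq> C" "{1..n} - (C \<union> D) \<noteq> {1..n} - (A \<union> C)"
    using a a' by blast+
  ultimately have E_notin: "{1..n} - (C \<union> D) \<notin> {A, C, {1..n} - (A \<union> C)}" by simp
  have "\<not> (\<forall>P \<in> A_fam n 3 {A} {A, C, D} \<union> B_fam n 3 {A} {A, C, D}. B \<in> P)" for B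
  proof
    assume "\<forall>P \<in> A_fam n 3 {A} {A, C, D} \<union> B_fam n 3 {A} {A, C, D}. B \<in> P"
    then have "B \<in> {A, C, {1..n} - (A \<union> C)}" "B \<in> {A, D, {1..n} - (A \<union> D)}"
      and "B = C \<or> B = D \<or> B = {1..n} - (C \<union> D)"
      unfolding A_fam_eq B_fam_eq by simp_all
    then show False using C_notin D_notin E_notin by (elim disjE) simp_all
  qed
  then show ?thesis unfolding non_trivial_def by blast
qed

lemma cross_partner_not_contains_complement:
  assumes G: "G \<in> Pi_part n 3" and "A \<notin> G"
    and meet_C: "{A, C, {1..n} - (A \<union> C)} \<inter> G \<noteq> {}"
    and meet_D: "{A, D, {1..n} - (A \<union> D)} \<inter> G \<noteq> {}"
  shows "{1..n} - (A \<union> C) \<notin> G"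
proof
  assume RC: "{1..n} - (A \<union> C) \<in> G"
  obtain w where w: "w \<in> {1..n}" "w \<notin> A" "w \<notin> C" "w \<notin> D" by (rule point_outside)
  obtain d where d: "d \<in> D" using nonempty by blast
  have d_RC: "d \<in> {1..n} - (A \<union> C)" using d disjoint proper by blast
  have "D \<notin> G"
  proof
    assume "D \<in> G"
    then have "D = {1..n} - (A \<union> C)" using Pi_part_block_eq[OF G _ RC d d_RC] by blast
    then show False using w by blast
  qed
  then have RD: "{1..n} - (A \<union> D) \<in> G" using meet_D \<open>A \<notin> G\<close> by blast
  have "{1..n} - (A \<union> C) = {1..n} - (A \<union> D)"
    using Pi_part_block_eq[OF G RC RD, of w] w by blast
  then show False using d d_RC by blast
qed

lemma subset_B_fam_if_cross_intersecting:
  assumes \<Y>: "\<Y> \<subseteq> Pi_part n 3" and cross: "cross_intersecting (A_fam n 3 {A} {A, C, D}) \<Y>"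
  shows "\<Y> \<subseteq> B_fam n 3 {A} {A, C, D}"
proof
  fix G assume "G \<in> \<Y>"
  then have G: "G \<in> Pi_part n 3" using \<Y> by blast
  have "\<forall>F \<in> A_fam n 3 {A} {A, C, D}. F \<inter> G \<noteq> {}"
    using cross \<open>G \<in> \<Y>\<close> unfolding cross_intersecting_iff[OF A_fam_subset] by blast
  then have meet: "{A, C, {1..n} - (A \<union> C)} \<inter> G \<noteq> {}" "{A, D, {1..n} - (A \<union> D)} \<inter> G \<noteq> {}"
    unfolding A_fam_eq by simp_all
  show "G \<in> B_fam n 3 {A} {A, C, D}"
  proof (cases "A \<in> G")
    case False
    have "{1..n} - (A \<union> C) \<notin> G" "{1..n} - (A \<union> D) \<notin> G"
      using cross_partner_not_contains_complement[OF G False meet]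
        proper_tripartition.cross_partner_not_contains_complement[OF swap G False meet(2,1)] by blast+
    then have "C \<in> G" "D \<in> G" using meet False by auto
    then have "G = {C, D, {1..n} - (C \<union> D)}" using Pi_part_3_eq[OF G] blocks_distinct(3) by blast
    then show ?thesis unfolding B_fam_eq by blast
  qed (use G in \<open>simp add: B_fam_eq\<close>)
qed

lemma eq_B_fam_if_card_ge:
  assumes \<Y>: "\<Y> \<subseteq> Pi_part n 3" and cross: "cross_intersecting (A_fam n 3 {A} {A, C, D}) \<Y>"
    and large: "2 ^ (n - 2) \<le> card \<Y>"
  shows "card A = 1" and "\<Y> = B_fam n 3 {A} {A, C, D}"
proof -
  have sub: "\<Y> \<subseteq> B_fam n 3 {A} {A, C, D}" using subset_B_fam_if_cross_intersecting[OF \<Y> cross] .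
  have fin: "finite (B_fam n 3 {A} {A, C, D})" using B_fam_subset finite_Pi_part finite_subset by blast
  have "(2::nat) ^ (n - 2) \<le> 2 ^ (n - card A - 1)"
    using large card_mono[OF fin sub] card_B_fam by linarith
  then have "n - 2 \<le> n - card A - 1" by simp
  moreover have "card A \<ge> 1" using nonempty proper card_A_lt
    by (metis One_nat_def Suc_leI card_gt_0_iff finite_atLeastAtMost finite_subset le_sup_iff psubsetE)
  ultimately show "card A = 1" using card_A_lt by linarith
  then have "card \<Y> = card (B_fam n 3 {A} {A, C, D})"
    using large card_mono[OF fin sub] card_B_fam by (simp add: numeral_2_eq_2)
  then show "\<Y> = B_fam n 3 {A} {A, C, D}" using card_subset_eq[OF fin sub] by blast
qed

end

lemma proper_tripartitionI:
  assumes G0: "G0 \<in> Pi_part n 3" and CD: "C \<in> G0" "D \<in> G0" "C \<noteq> D" "C \<inter> A = {}" "D \<inter> A = {}"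
    and A: "A \<noteq> {}" "A \<subseteq> {1..n}"
    and ne: "{A, C, {1..n} - (A \<union> C)} \<noteq> {A, D, {1..n} - (A \<union> D)}"
  shows "proper_tripartition n A C D"
proof
  show "A \<noteq> {}" "C \<noteq> {}" "D \<noteq> {}" using A Pi_partD(3)[OF G0] CD by blast+
  show "A \<inter> C = {}" "A \<inter> D = {}" "C \<inter> D = {}" using CD Pi_partD(5)[OF G0] by blast+
  have "A \<union> C \<union> D \<subseteq> {1..n}" using A Pi_partD(4)[OF G0] CD by blast
  moreover have "A \<union> C \<union> D \<noteq> {1..n}"
  proof
    assume "A \<union> C \<union> D = {1..n}"
    then have "{1..n} - (A \<union> C) = D" "{1..n} - (A \<union> D) = C" using CD Pi_partD(5)[OF G0] by blast+
    then show False using ne by (simp add: insert_commute)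
  qed
  ultimately show "A \<union> C \<union> D \<subset> {1..n}" by blast
qed

lemma A_fam_if_common_block:
  assumes \<X>: "\<X> \<subseteq> Pi_part n 3" and \<Y>: "\<Y> \<subseteq> Pi_part n 3"
    and cross: "cross_intersecting \<X> \<Y>" and nontriv: "non_trivial \<X> \<Y>"
    and common: "\<forall>F\<in>\<X>. A \<in> F" and two: "card \<X> = 2"
  shows "\<exists>C D. proper_tripartition n A C D \<and> \<X> = A_fam n 3 {A} {A, C, D}"
proof -
  let ?h = "\<lambda>C. {A, C, {1..n} - (A \<union> C)}"
  have "\<X> \<noteq> {}" using two by auto
  then obtain G0 where G0: "G0 \<in> Pi_part n 3" and card_le: "card {C \<in> G0. C \<inter> A = {}} \<le> 2"
    and sub: "\<X> \<subseteq> ?h ` {C \<in> G0. C \<inter> A = {}}"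
    by (rule common_block_completions[OF \<X> \<Y> cross nontriv common])
  define Cs where "Cs = {C \<in> G0. C \<inter> A = {}}"
  have fin: "finite Cs" using finite_Pi_part_blocks[OF G0] unfolding Cs_def by simp
  have sub': "\<X> \<subseteq> ?h ` Cs" using sub unfolding Cs_def .
  have "2 \<le> card (?h ` Cs)" using card_mono[OF finite_imageI[OF fin] sub'] two by simp
  moreover have "card (?h ` Cs) \<le> card Cs" using card_image_le[OF fin] .
  ultimately have "card Cs = 2" "card (?h ` Cs) = 2" using card_le unfolding Cs_def by linarith+
  then have \<X>_eq: "\<X> = ?h ` Cs" using card_subset_eq[OF finite_imageI[OF fin] sub'] two by simp
  obtain C D where Cs: "Cs = {C, D}" "C \<noteq> D" using \<open>card Cs = 2\<close> unfolding card_2_iff by blast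
  have h_ne: "?h C \<noteq> ?h D" using \<open>card (?h ` Cs) = 2\<close> unfolding Cs by auto
  obtain F where "F \<in> \<X>" using \<open>\<X> \<noteq> {}\<close> by blast
  then have "F \<in> Pi_part n 3" "A \<in> F" using \<X> common by auto
  then have A: "A \<noteq> {}" "A \<subseteq> {1..n}" using Pi_partD(3,4) by auto
  have "C \<in> G0" "D \<in> G0" "C \<inter> A = {}" "D \<inter> A = {}" using Cs(1) unfolding Cs_def by blast+
  then have "proper_tripartition n A C D"
    using proper_tripartitionI[OF G0 _ _ Cs(2) _ _ A h_ne] by blast
  moreover have "\<X> = A_fam n 3 {A} {A, C, D}"
    using proper_tripartition.A_fam_eq[OF calculation] \<X>_eq Cs(1) by simp
  ultimately show ?thesis by blast
qed

lemma exists_cross_intersecting_non_trivial: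
  assumes "n \<ge> 4"
  shows "\<exists>\<X> \<Y>. \<X> \<subseteq> Pi_part n 3 \<and> \<Y> \<subseteq> Pi_part n 3 \<and> cross_intersecting \<X> \<Y> \<and>
    non_trivial \<X> \<Y> \<and> card \<X> * card \<Y> = 2 ^ (n - 1)"
proof -
  interpret proper_tripartition n "{1}" "{2}" "{3}"
  proof
    have "{1} \<union> {2} \<union> {3} \<subseteq> {1..n}" "4 \<in> {1..n} - ({1} \<union> {2} \<union> {3})"
      using assms by auto
    then show "{1} \<union> {2} \<union> {3} \<subset> {1..n}" by blast
  qed auto
  have "card (A_fam n 3 {{1}} {{1}, {2}, {3}}) * card (B_fam n 3 {{1}} {{1}, {2}, {3}}) = 2 ^ (n - 1)"
  proof -
    have "n - 1 = Suc (n - 2)" using assms by simp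
    then show ?thesis unfolding card_A_fam card_B_fam by simp
  qed
  then show ?thesis
    using A_fam_subset B_fam_subset cross_intersecting_A_fam_B_fam non_trivial_A_fam_B_fam
    by (intro exI[of _ "A_fam n 3 {{1}} {{1}, {2}, {3}}"] exI[of _ "B_fam n 3 {{1}} {{1}, {2}, {3}}"]) simp
qed

lemma log2_6_ge_2: "(2::real) \<le> log 2 6"
proof -
  have "(2::real) = log 2 (2 ^ 2)" by (subst log_pow_cancel) simp_all
  also have "\<dots> \<le> log 2 6" by simp
  finally show ?thesis .
qed

lemma ge_16_if_ge_2_L_3_1: "real n \<ge> 2 * L 3 1 \<Longrightarrow> n \<ge> 16"
  using log2_6_ge_2 unfolding L_def by simp

lemma two_le_card_if_product_ge:
  assumes \<X>: "\<X> \<subseteq> Pi_part n 3" and \<Y>: "\<Y> \<subseteq> Pi_part n 3"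
    and cross: "cross_intersecting \<X> \<Y>" and large: "2 ^ (n - 1) \<le> card \<X> * card \<Y>"
  shows "2 \<le> card \<X>"
proof -
  have "card \<X> \<noteq> 0"
  proof
    assume "card \<X> = 0"
    then show False using large by simp
  qed
  moreover have "card \<X> \<noteq> 1"
  proof
    assume "card \<X> = 1"
    then obtain P where "\<X> = {P}" by (rule card_1_singletonE)
    then show False
      using card_cross_singleton_lt[OF \<Y> _ cross[unfolded \<open>\<X> = {P}\<close>]] \<X> large by simp
  qed
  ultimately show ?thesis by linarith
qed

lemma A_fam_B_fam_if_common_block:
  assumes \<F>: "\<F> \<subseteq> Pi_part n 3" and \<G>: "\<G> \<subseteq> Pi_part n 3"
    and cross: "cross_intersecting \<F> \<G>" and nontriv: "non_trivial \<F> \<G>"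
    and common: "\<forall>F\<in>\<F>. A \<in> F" and two: "card \<F> = 2"
    and large: "2 ^ (n - 1) \<le> card \<F> * card \<G>"
  shows "\<exists>a M. is_partition M \<and> card M = 3 \<and> \<Union>M \<subseteq> {1..n} \<and> {a} \<in> M \<and>
           card (\<Union>M) < n \<and> \<F> = A_fam n 3 {{a}} M \<and> \<G> = B_fam n 3 {{a}} M"
proof -
  obtain C D where t: "proper_tripartition n A C D" and \<F>_eq: "\<F> = A_fam n 3 {A} {A, C, D}"
    using A_fam_if_common_block[OF \<F> \<G> cross nontriv common two] by blast
  have "n - 1 = Suc (n - 2)" using proper_tripartition.card_A_lt[OF t] by simp
  then have "2 ^ (n - 2) \<le> card \<G>" using large two by simp
  then have "card A = 1" "\<G> = B_fam n 3 {A} {A, C, D}"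
    using proper_tripartition.eq_B_fam_if_card_ge[OF t \<G>] cross \<F>_eq by auto
  moreover obtain a where "{a} = A" using \<open>card A = 1\<close> by (metis card_1_singletonE)
  moreover have "\<Union>{A, C, D} \<subseteq> {1..n}" using proper_tripartition.proper[OF t] by auto
  ultimately show ?thesis
    using \<F>_eq proper_tripartition.is_partition[OF t] proper_tripartition.card_blocks[OF t]
      proper_tripartition.card_Union_lt[OF t]
    by (intro exI[of _ a] exI[of _ "{A, C, D}"]) simp
qed

theorem mainTheorem7:
  fixes n :: nat and \<F> \<G> :: "nat set set set"
  assumes hn: "real n \<ge> 2 * L 3 1"
    and hF: "\<F> \<subseteq> Pi_part n 3" and hG: "\<G> \<subseteq> Pi_part n 3"
    and hcross: "cross_intersecting \<F> \<G>"
    and hnt: "non_trivial \<F> \<G>"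
    and hmax: "\<forall>\<F>' \<G>'. \<F>' \<subseteq> Pi_part n 3 \<and> \<G>' \<subseteq> Pi_part n 3 \<and>
                 cross_intersecting \<F>' \<G>' \<and> non_trivial \<F>' \<G>'
                 \<longrightarrow> card \<F>' * card \<G>' \<le> card \<F> * card \<G>"
    and hle: "card \<F> \<le> card \<G>"
  shows "\<exists>a M. is_partition M \<and> card M = 3 \<and> \<Union>M \<subseteq> {1..n} \<and> {a} \<in> M \<and>
           card (\<Union>M) < n \<and>
           \<F> = A_fam n 3 {{a}} M \<and> \<G> = B_fam n 3 {{a}} M"
proof -
  have n: "n \<ge> 16" using ge_16_if_ge_2_L_3_1[OF hn] .
  then obtain \<X> \<Y> where "\<X> \<subseteq> Pi_part n 3" "\<Y> \<subseteq> Pi_part n 3" "cross_intersecting \<X> \<Y>"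
    "non_trivial \<X> \<Y>" and "card \<X> * card \<Y> = 2 ^ (n - 1)"
    using exists_cross_intersecting_non_trivial[of n] by auto
  then have large: "2 ^ (n - 1) \<le> card \<F> * card \<G>" using hmax by metis
  have "(2::nat) ^ 7 \<le> 2 ^ (n - 1)" using n by (intro power_increasing) simp_all
  then have not_small: "\<not> card \<F> * card \<G> \<le> 9 * 9" using large by simp
  show ?thesis
  proof (cases "\<exists>A. \<forall>F\<in>\<F>. A \<in> F")
    case True
    then obtain A where A: "\<forall>F\<in>\<F>. A \<in> F" by blast
    have "card \<F> = 2"
      using card_le_2_if_common_block[OF hF hG hcross hnt A]
        two_le_card_if_product_ge[OF hF hG hcross large] by linarith
    then show ?thesis using A_fam_B_fam_if_common_block[OF hF hG hcross hnt A _ large] by blast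
  next
    case False
    have "card \<G> \<le> 9"
      using card_le_9_if_no_common_block[OF hF hG hcross _ False] not_small by fastforce
    with hle have "card \<F> * card \<G> \<le> 9 * 9" by (intro mult_le_mono) simp_all
    with not_small show ?thesis by blast
  qed
qed

end
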